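(* Let $t\ge1$ and $G=\prod_{i=1}^t K_{n_i}$ with all $n_i\ge2$. Then $$\gamma(G)\le 2^t-A(t,2,t-1)\le 3\cdot 2^{t-2}.$$
   Context: Vertices of $\prod_{i=1}^t K_{n_i}$ are tuples $(x_1,\dots,x_t)$ with $x_i\in\{0,\dots,n_i-1\}$, adjacent iff they differ in every coordinate. $\gamma(G)$ is the domination number: the minimum size of a set $D$ such that every vertex is in $D$ or adjacent to a vertex of $D$. $A(t,d,t-1)$ denotes the maximum number of binary vectors of length $t$ such that any two distinct ones have Hamming distance between $d$ and $t-1$ inclusive. *)

theory Defs
  imports Complex_Main "HOL-Library.FuncSet"
begin

text \<open>Vertex set of the direct product K_{n_0} x ... x K_{n_{t-1}}:
  tuples represented as extensional functions on {..<t}.\<close>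
definition prod_verts :: "nat \<Rightarrow> (nat \<Rightarrow> nat) \<Rightarrow> (nat \<Rightarrow> nat) set" where
  "prod_verts t n = (\<Pi>\<^sub>E i\<in>{..<t}. {..<n i})"

definition prod_adj :: "nat \<Rightarrow> (nat \<Rightarrow> nat) \<Rightarrow> (nat \<Rightarrow> nat) \<Rightarrow> bool" where
  "prod_adj t x y = (\<forall>i<t. x i \<noteq> y i)"

definition dominating :: "'a set \<Rightarrow> ('a \<Rightarrow> 'a \<Rightarrow> bool) \<Rightarrow> 'a set \<Rightarrow> bool" where
  "dominating V E D = (D \<subseteq> V \<and> (\<forall>v\<in>V. v \<in> D \<or> (\<exists>u\<in>D. E v u)))"

definition domination_number :: "'a set \<Rightarrow> ('a \<Rightarrow> 'a \<Rightarrow> bool) \<Rightarrow> nat" where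
  "domination_number V E = (LEAST k. \<exists>D. dominating V E D \<and> finite D \<and> card D = k)"

definition binvecs :: "nat \<Rightarrow> (nat \<Rightarrow> bool) set" where
  "binvecs t = (\<Pi>\<^sub>E i\<in>{..<t}. UNIV)"

definition hamming :: "nat \<Rightarrow> (nat \<Rightarrow> bool) \<Rightarrow> (nat \<Rightarrow> bool) \<Rightarrow> nat" where
  "hamming t x y = card {i\<in>{..<t}. x i \<noteq> y i}"

definition A_code :: "nat \<Rightarrow> nat \<Rightarrow> nat \<Rightarrow> nat" where
  "A_code t d e = Max {card C | C. C \<subseteq> binvecs t \<and>
     (\<forall>x\<in>C. \<forall>y\<in>C. x \<noteq> y \<longrightarrow> d \<le> hamming t x y \<and> hamming t x y \<le> e)}"

end

theory Submission
  imports Defs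
begin

text \<open>Let C be a set of binary words of length t with pairwise distances in [2, t-1], and
  view the words outside C as 0/1-vertices. A vertex with a coordinate \<open>\<ge> 2\<close> is adjacent to two
  0/1-vertices at distance 1, and a 0/1-vertex is adjacent to its antipode, at distance t; in
  neither case can both words lie in C, so the vertex is dominated. An optimal C gives the first
  bound. For the second, the even-weight words vanishing in coordinate 0 form such a code of size
  \<open>2^(t-2)\<close>: even weight forces distance \<open>\<ge> 2\<close>, the common zero forces distance \<open>\<le> t - 1\<close>.\<close>

definition binary_code :: "nat \<Rightarrow> nat \<Rightarrow> nat \<Rightarrow> (nat \<Rightarrow> bool) set \<Rightarrow> bool" where
  "binary_code t d e C \<longleftrightarrow> C \<subseteq> binvecs t \<and>
     (\<forall>x\<in>C. \<forall>y\<in>C. x \<noteq> y \<longrightarrow> d \<le> hamming t x y \<and> hamming t x y \<le> e)"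

lemma finite_binvecs: "finite (binvecs t)"
  by (simp add: binvecs_def finite_PiE)

lemma card_binvecs: "card (binvecs t) = 2 ^ t"
  by (simp add: binvecs_def card_PiE)

lemma finite_code_sizes: "finite {card C | C. binary_code t d e C}"
  by (rule finite_subset[of _ "card ` Pow (binvecs t)"]) (auto simp: binary_code_def finite_binvecs)

lemma card_le_A_code: "binary_code t d e C \<Longrightarrow> card C \<le> A_code t d e"
  unfolding A_code_def using finite_code_sizes
  by (intro Max_ge) (auto simp: binary_code_def finite_binvecs)

lemma A_code_attained: "\<exists>C. binary_code t d e C \<and> card C = A_code t d e"
proof -
  have "binary_code t d e {}"
    by (simp add: binary_code_def)
  then have "A_code t d e \<in> {card C | C. binary_code t d e C}"
    unfolding A_code_def binary_code_def[symmetric] using finite_code_sizes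
    by (intro Max_in) auto
  then show ?thesis
    by auto
qed

lemma A_code_le_card_binvecs: "A_code t d e \<le> 2 ^ t"
  using A_code_attained[of t d e] card_mono[OF finite_binvecs] card_binvecs
  by (metis binary_code_def)

lemma one_le_A_code: "1 \<le> A_code t d e"
proof -
  have "binary_code t d e {restrict (\<lambda>_. False) {..<t}}"
    by (simp add: binary_code_def binvecs_def)
  from card_le_A_code[OF this] show ?thesis
    by simp
qed

lemma domination_number_le_card:
  "dominating V E D \<Longrightarrow> finite D \<Longrightarrow> domination_number V E \<le> card D"
  unfolding domination_number_def by (rule Least_le) blast

definition vertex_of_word :: "nat \<Rightarrow> (nat \<Rightarrow> bool) \<Rightarrow> nat \<Rightarrow> nat" where
  "vertex_of_word t b = restrict (\<lambda>i. of_bool (b i)) {..<t}"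

lemma inj_on_vertex_of_word: "inj_on (vertex_of_word t) (binvecs t)"
proof
  fix b b' assume b: "b \<in> binvecs t" and b': "b' \<in> binvecs t"
    and eq: "vertex_of_word t b = vertex_of_word t b'"
  show "b = b'"
  proof (rule PiE_ext[OF b[unfolded binvecs_def] b'[unfolded binvecs_def]])
    fix i assume "i \<in> {..<t}"
    then show "b i = b' i"
      using fun_cong[OF eq, of i] by (simp add: vertex_of_word_def of_bool_eq_iff)
  qed
qed

lemma vertex_of_word_in_prod_verts:
  "\<forall>i<t. n i \<ge> 2 \<Longrightarrow> vertex_of_word t b \<in> prod_verts t n"
  by (auto simp: vertex_of_word_def prod_verts_def)

lemma prod_adj_vertex_of_word_iff:
  "prod_adj t v (vertex_of_word t b) \<longleftrightarrow> (\<forall>i<t. v i \<noteq> of_bool (b i))"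
  by (simp add: prod_adj_def vertex_of_word_def)

lemma hamming_self [simp]: "hamming t b b = 0"
  by (simp add: hamming_def)

lemma obtain_adjacent_words_at_distance_one:
  assumes "j < t" and "v j \<ge> 2"
  obtains b b' where "b \<in> binvecs t" "b' \<in> binvecs t" "hamming t b b' = 1"
    "prod_adj t v (vertex_of_word t b)" "prod_adj t v (vertex_of_word t b')"
proof
  define b where "b = restrict (\<lambda>i. v i = 0) {..<t}"
  show "b \<in> binvecs t" "b(j := True) \<in> binvecs t"
    using assms by (auto simp: b_def binvecs_def)
  show "prod_adj t v (vertex_of_word t b)" "prod_adj t v (vertex_of_word t (b(j := True)))"
    using assms by (auto simp: prod_adj_vertex_of_word_iff b_def)
  have "{i\<in>{..<t}. b i \<noteq> (b(j := True)) i} = {j}"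
    using assms by (auto simp: b_def)
  then show "hamming t b (b(j := True)) = 1"
    by (simp add: hamming_def)
qed

lemma obtain_binary_vertex_and_antipode:
  assumes "v \<in> prod_verts t n" and "\<forall>i<t. v i < 2"
  obtains b b' where "b \<in> binvecs t" "b' \<in> binvecs t" "hamming t b b' = t"
    "v = vertex_of_word t b" "prod_adj t v (vertex_of_word t b')"
proof
  define b where "b = restrict (\<lambda>i. v i = 1) {..<t}"
  define b' where "b' = restrict (\<lambda>i. v i = 0) {..<t}"
  show "b \<in> binvecs t" "b' \<in> binvecs t"
    by (simp_all add: b_def b'_def binvecs_def)
  have binary: "v i = 0 \<or> v i = 1" if "i < t" for i
    using assms(2) that by (simp add: less_2_cases_iff)
  show "v = vertex_of_word t b"
  proof
    fix i show "v i = vertex_of_word t b i"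
      using binary[of i] PiE_arb[OF assms(1)[unfolded prod_verts_def], of i]
      by (cases "i < t") (auto simp: vertex_of_word_def b_def)
  qed
  show "prod_adj t v (vertex_of_word t b')"
    by (auto simp: prod_adj_vertex_of_word_iff b'_def)
  have "{i\<in>{..<t}. b i \<noteq> b' i} = {..<t}"
    using binary by (fastforce simp: b_def b'_def)
  then show "hamming t b b' = t"
    by (simp add: hamming_def)
qed

lemma dominating_words_outside_code:
  assumes "t \<ge> 1" and "\<forall>i<t. n i \<ge> 2" and C: "binary_code t 2 (t - 1) C"
  shows "dominating (prod_verts t n) (prod_adj t) (vertex_of_word t ` (binvecs t - C))"
    (is "dominating ?V ?E ?D")
proof -
  have one_in_D: "vertex_of_word t b \<in> ?D \<or> vertex_of_word t b' \<in> ?D"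
    if "b \<in> binvecs t" "b' \<in> binvecs t" "hamming t b b' \<noteq> 0"
      "hamming t b b' < 2 \<or> hamming t b b' > t - 1" for b b'
  proof -
    have "b \<notin> C \<or> b' \<notin> C"
      using C that unfolding binary_code_def by (metis hamming_self not_le)
    then show ?thesis
      using that(1,2) by blast
  qed
  have "v \<in> ?D \<or> (\<exists>u\<in>?D. ?E v u)" if v: "v \<in> ?V" for v
  proof (cases "\<exists>j<t. v j \<ge> 2")
    case True
    then obtain j where "j < t" "v j \<ge> 2"
      by blast
    with one_in_D show ?thesis
      by (elim obtain_adjacent_words_at_distance_one) fastforce+
  next
    case False
    then have "\<forall>i<t. v i < 2"
      by auto
    with v one_in_D \<open>t \<ge> 1\<close> show ?thesis
      by (elim obtain_binary_vertex_and_antipode) fastforce+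
  qed
  moreover have "?D \<subseteq> ?V"
    using assms(2) by (auto intro: vertex_of_word_in_prod_verts)
  ultimately show ?thesis
    unfolding dominating_def by blast
qed

lemma domination_number_le_code:
  assumes "t \<ge> 1" and "\<forall>i<t. n i \<ge> 2" and C: "binary_code t 2 (t - 1) C"
  shows "domination_number (prod_verts t n) (prod_adj t) \<le> 2 ^ t - card C"
proof -
  have "C \<subseteq> binvecs t"
    using C by (simp add: binary_code_def)
  then have "card (vertex_of_word t ` (binvecs t - C)) = 2 ^ t - card C"
    using inj_on_subset[OF inj_on_vertex_of_word]
    by (simp add: card_image card_Diff_subset finite_subset[OF _ finite_binvecs] card_binvecs)
  then show ?thesis
    using domination_number_le_card[OF dominating_words_outside_code[OF assms]]
    by (simp add: finite_binvecs)
qed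

definition weight :: "nat \<Rightarrow> (nat \<Rightarrow> bool) \<Rightarrow> nat" where
  "weight t x = card {i\<in>{..<t}. x i}"

lemma even_card_symmetric_difference_iff:
  assumes "finite A" and "finite B"
  shows "even (card ((A - B) \<union> (B - A))) \<longleftrightarrow> even (card A + card B)"
proof -
  have "card A + card B = card ((A - B) \<union> (B - A)) + 2 * card (A \<inter> B)"
    using assms card_Int_Diff[of A B] card_Int_Diff[of B A]
    by (simp add: card_Un_disjoint Int_commute Diff_Int_distrib2 Int_Diff)
  then show ?thesis
    by simp
qed

lemma even_hamming_iff: "even (hamming t x y) \<longleftrightarrow> even (weight t x + weight t y)"
proof -
  let ?X = "{i\<in>{..<t}. x i}" and ?Y = "{i\<in>{..<t}. y i}"
  have "{i\<in>{..<t}. x i \<noteq> y i} = (?X - ?Y) \<union> (?Y - ?X)"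
    by auto
  then show ?thesis
    using even_card_symmetric_difference_iff[of ?X ?Y]
    by (simp add: hamming_def weight_def)
qed

lemma hamming_pos:
  assumes "x \<in> binvecs t" and "y \<in> binvecs t" and "x \<noteq> y"
  shows "hamming t x y > 0"
proof -
  obtain i where "i < t" "x i \<noteq> y i"
    using assms PiE_ext[of x "{..<t}" "\<lambda>_. UNIV" y] by (auto simp: binvecs_def)
  then show ?thesis
    by (auto simp: hamming_def card_gt_0_iff)
qed

definition even_code :: "nat \<Rightarrow> (nat \<Rightarrow> bool) set" where
  "even_code t = {x \<in> binvecs t. \<not> x 0 \<and> even (weight t x)}"

lemma binary_code_even_code: "binary_code t 2 (t - 1) (even_code t)"
  unfolding binary_code_def
proof (intro conjI ballI impI)
  show "even_code t \<subseteq> binvecs t"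
    by (auto simp: even_code_def)
next
  fix x y assume x: "x \<in> even_code t" and y: "y \<in> even_code t" and "x \<noteq> y"
  have "hamming t x y > 0" "even (hamming t x y)"
    using x y \<open>x \<noteq> y\<close> by (auto simp: even_code_def even_hamming_iff intro: hamming_pos)
  then show "2 \<le> hamming t x y"
    by (cases "hamming t x y = 1") auto
  have "{i\<in>{..<t}. x i \<noteq> y i} \<subseteq> {..<t} - {0}"
    using x y by (auto simp: even_code_def)
  from card_mono[OF _ this] show "hamming t x y \<le> t - 1"
    by (simp add: hamming_def card_Diff_singleton_if split: if_split_asm)
qed

lemma two_power_le_card_even_code:
  assumes "t \<ge> 2"
  shows "2 ^ (t - 2) \<le> card (even_code t)"
proof -
  define P where "P = (\<Pi>\<^sub>E i\<in>{2..<t}. (UNIV :: bool set))"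
  define parity where "parity c = odd (card {j\<in>{2..<t}. c j})" for c :: "nat \<Rightarrow> bool"
  define extend where "extend c = restrict (\<lambda>i. if i = 0 then False else if i = 1
      then parity c else c i) {..<t}" for c
  have "{i\<in>{..<t}. extend c i} = {j\<in>{2..<t}. c j} \<union> (if parity c then {1} else {})" for c
    using assms by (auto simp: extend_def)
  then have "weight t (extend c) = card {j\<in>{2..<t}. c j} + of_bool (parity c)" for c
    by (simp add: weight_def)
  then have "even (weight t (extend c))" for c
    by (cases "parity c") (simp_all add: parity_def)
  moreover have "extend c \<in> binvecs t" "\<not> extend c 0" for c
    using assms by (simp_all add: binvecs_def extend_def)
  ultimately have "extend ` P \<subseteq> even_code t"
    by (auto simp: even_code_def)
  moreover have "inj_on extend P"
  proof
    fix c c' assume c: "c \<in> P" and c': "c' \<in> P" and eq: "extend c = extend c'"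
    show "c = c'"
    proof (rule PiE_ext[OF c[unfolded P_def] c'[unfolded P_def]])
      fix i assume "i \<in> {2..<t}"
      then show "c i = c' i"
        using fun_cong[OF eq, of i] by (simp add: extend_def)
    qed
  qed
  ultimately have "card P \<le> card (even_code t)"
    by (intro card_inj_on_le) (auto simp: even_code_def finite_binvecs)
  then show ?thesis
    by (simp add: P_def card_PiE)
qed

lemma two_power_le_A_code:
  "t \<ge> 2 \<Longrightarrow> 2 ^ (t - 2) \<le> A_code t 2 (t - 1)"
  using two_power_le_card_even_code card_le_A_code[OF binary_code_even_code] le_trans by blast

theorem corollary4p6:
  fixes t :: nat and n :: "nat \<Rightarrow> nat"
  assumes "t \<ge> 1" and "\<forall>i<t. n i \<ge> 2"
  shows "real (domination_number (prod_verts t n) (prod_adj t))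
           \<le> 2 ^ t - real (A_code t 2 (t - 1))
       \<and> 2 ^ t - real (A_code t 2 (t - 1)) \<le> 3 * 2 ^ t / (4::real)"
proof
  obtain C where C: "binary_code t 2 (t - 1) C" "card C = A_code t 2 (t - 1)"
    using A_code_attained by blast
  have "real (domination_number (prod_verts t n) (prod_adj t))
      \<le> real (2 ^ t - A_code t 2 (t - 1))"
    using domination_number_le_code[OF assms C(1)] C(2) by simp
  also have "\<dots> = 2 ^ t - real (A_code t 2 (t - 1))"
    using A_code_le_card_binvecs by (simp add: of_nat_diff)
  finally show "real (domination_number (prod_verts t n) (prod_adj t))
      \<le> 2 ^ t - real (A_code t 2 (t - 1))" .
next
  have "(2::real) ^ t \<le> 4 * real (A_code t 2 (t - 1))"
  proof (cases "t = 1")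
    case True
    then show ?thesis
      using one_le_A_code[of t 2 "t - 1"] by simp
  next
    case False
    define m where "m = t - 2"
    then have "t = m + 2"
      using assms(1) False by simp
    then show ?thesis
      using two_power_le_A_code[of t] by (simp add: power_add flip: of_nat_le_iff)
  qed
  then show "2 ^ t - real (A_code t 2 (t - 1)) \<le> 3 * 2 ^ t / (4::real)"
    by simp
qed

end
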